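(* Let $d\geq 1$ and $\delta\in\{1,2,3\}$. Every $d$-dimensional cube packing with $2^d-\delta$ cubes can be extended to a cube tiling, i.e. there is a $d$-dimensional cube tiling containing all cubes of the packing.
   Context: A $d$-dimensional cube packing is a $4\mathbb{Z}^d$-invariant set of pairwise disjoint translates $z+[0,2[^d$ with $z\in\mathbb{Z}^d$; equivalently a set of representatives $x\in\{0,1,2,3\}^d$ of the $4\mathbb{Z}^d$-orbits of its cubes, two representatives $x,x'$ giving disjoint cubes iff $|x_i-x'_i|=2$ for some coordinate $i$. Its number of cubes is the number of orbits. A cube tiling is a cube packing whose cubes cover $\mathbb{R}^d$ (equivalently, one with $2^d$ cubes). *)

theory Defs
  imports Main
begin

text \<open>Representatives of the 4Z^d-orbits of cubes z + [0,2[^d: points x in {0,1,2,3}^d,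
  encoded as functions nat => int that are 0 outside the coordinates 0..d-1.\<close>
definition cube_reps :: "nat \<Rightarrow> (nat \<Rightarrow> int) set" where
  "cube_reps d = {x. (\<forall>i<d. x i \<in> {0..3}) \<and> (\<forall>i\<ge>d. x i = 0)}"

text \<open>Two representatives give disjoint cubes iff they differ by 2 in some coordinate.\<close>
definition cube_packing :: "nat \<Rightarrow> (nat \<Rightarrow> int) set \<Rightarrow> bool" where
  "cube_packing d P \<longleftrightarrow> P \<subseteq> cube_reps d \<and>
     (\<forall>x\<in>P. \<forall>y\<in>P. x \<noteq> y \<longrightarrow> (\<exists>i<d. \<bar>x i - y i\<bar> = 2))"

definition cube_tiling :: "nat \<Rightarrow> (nat \<Rightarrow> int) set \<Rightarrow> bool" where
  "cube_tiling d T \<longleftrightarrow> cube_packing d T \<and> card T = 2 ^ d"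

end

theory Submission
  imports Defs
begin

(* Unit cells z + [0,1[^d, taken modulo 4, are used as test points: a tiling leaves no uncovered
   cell (hole), and a cube can be added iff all of its 2^d cells are holes.
   Cutting the d-dimensional torus at height c in the last coordinate gives the layer c, a
   (d-1)-dimensional packing whose holes are exactly the holes of the packing at that height;
   layers c and c+2 partition the packing. If 2^d - \<delta> cubes are packed, 1 \<le> \<delta> \<le> 3, counting
   shows that either some layer is full and a neighbouring one misses at most three cubes, or
   two neighbouring layers miss exactly one cube each. By induction these layers admit a further
   cube, and in both cases the holes of the neighbouring layers force that a suitable cube placed
   across two heights covers only holes. *)

section \<open>Cells\<close>

text \<open>A cell z stands for the unit cube z + [0,1[^d modulo 4; only its coordinates below d
  matter. The cube with representative x covers the cell z iff each z i - x i is 0 or 1 mod 4.\<close>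

definition covers_seg :: "int \<Rightarrow> int \<Rightarrow> bool" where
  "covers_seg a t \<longleftrightarrow> (t - a) mod 4 < 2"

definition covers :: "nat \<Rightarrow> (nat \<Rightarrow> int) \<Rightarrow> (nat \<Rightarrow> int) \<Rightarrow> bool" where
  "covers d x z \<longleftrightarrow> (\<forall>i<d. covers_seg (x i) (z i))"

definition hole :: "nat \<Rightarrow> (nat \<Rightarrow> int) set \<Rightarrow> (nat \<Rightarrow> int) \<Rightarrow> bool" where
  "hole d P z \<longleftrightarrow> (\<forall>x\<in>P. \<not> covers d x z)"

definition disjoint_from :: "nat \<Rightarrow> (nat \<Rightarrow> int) set \<Rightarrow> (nat \<Rightarrow> int) \<Rightarrow> bool" where
  "disjoint_from d P y \<longleftrightarrow> (\<forall>x\<in>P. \<exists>i<d. \<bar>x i - y i\<bar> = 2)"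

definition extensible :: "nat \<Rightarrow> (nat \<Rightarrow> int) set \<Rightarrow> bool" where
  "extensible d P \<longleftrightarrow> (\<exists>y\<in>cube_reps d. disjoint_from d P y)"

lemma covers_seg_mod: "covers_seg a (t mod 4) \<longleftrightarrow> covers_seg a t"
  by (simp add: covers_seg_def mod_diff_left_eq)

lemma covers_seg_add2: "covers_seg a (t + 2) \<longleftrightarrow> \<not> covers_seg a t"
  unfolding covers_seg_def by presburger

lemma opposite_iff_no_common_seg:
  assumes "a \<in> {0..3}" "b \<in> {0..3}"
  shows "\<bar>a - b\<bar> = 2 \<longleftrightarrow> \<not> (\<exists>t. covers_seg a t \<and> covers_seg b t)"
proof
  assume "\<bar>a - b\<bar> = 2"
  then show "\<not> (\<exists>t. covers_seg a t \<and> covers_seg b t)"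
    unfolding covers_seg_def by presburger
next
  assume "\<not> (\<exists>t. covers_seg a t \<and> covers_seg b t)"
  then have "\<not> (covers_seg a a \<and> covers_seg b a)" "\<not> (covers_seg a b \<and> covers_seg b b)"
    by blast+
  with assms show "\<bar>a - b\<bar> = 2"
    unfolding covers_seg_def by auto presburger
qed

lemma covers_seg_separate:
  assumes "a mod 4 \<noteq> b mod 4"
  obtains t where "covers_seg b t" "\<not> covers_seg a t"
proof
  let ?t = "if (b - a) mod 4 = 1 then b + 1 else b"
  show "covers_seg b ?t" "\<not> covers_seg a ?t"
    using assms unfolding covers_seg_def by presburger+
qed

lemma cube_reps_range: "x \<in> cube_reps d \<Longrightarrow> i < d \<Longrightarrow> x i \<in> {0..3}"
  by (simp add: cube_reps_def)

lemma cube_reps_differ_below: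
  assumes "x \<in> cube_reps d" "y \<in> cube_reps d" "x \<noteq> y"
  obtains k where "k < d" "x k \<noteq> y k"
proof -
  have "x k = y k" if "\<not> (\<exists>k<d. x k \<noteq> y k)" for k
    using assms(1,2) that unfolding cube_reps_def by (cases "k < d") auto
  with assms(3) that show ?thesis
    by blast
qed

lemma finite_cube_reps: "finite (cube_reps d)"
proof (rule finite_subset)
  show "cube_reps d \<subseteq> {x. \<forall>i. (i \<in> {..<d} \<longrightarrow> x i \<in> {0..3}) \<and> (i \<notin> {..<d} \<longrightarrow> x i = 0)}"
    by (auto simp: cube_reps_def)
qed (rule finite_set_of_finite_funs; simp)

lemma packing_subset_reps: "cube_packing d P \<Longrightarrow> P \<subseteq> cube_reps d"
  by (simp add: cube_packing_def)

lemma finite_packing: "cube_packing d P \<Longrightarrow> finite P"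
  using finite_cube_reps finite_subset packing_subset_reps by blast

lemma disjoint_iff_no_common_cell:
  assumes "x \<in> cube_reps d" "y \<in> cube_reps d"
  shows "(\<exists>i<d. \<bar>x i - y i\<bar> = 2) \<longleftrightarrow> \<not> (\<exists>z. covers d x z \<and> covers d y z)"
proof
  assume "\<exists>i<d. \<bar>x i - y i\<bar> = 2"
  then show "\<not> (\<exists>z. covers d x z \<and> covers d y z)"
    using assms opposite_iff_no_common_seg cube_reps_range by (fastforce simp: covers_def)
next
  assume no_common: "\<not> (\<exists>z. covers d x z \<and> covers d y z)"
  show "\<exists>i<d. \<bar>x i - y i\<bar> = 2"
  proof (rule ccontr)
    assume "\<not> (\<exists>i<d. \<bar>x i - y i\<bar> = 2)"
    then have "\<forall>i. \<exists>t. i < d \<longrightarrow> covers_seg (x i) t \<and> covers_seg (y i) t"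
      using assms opposite_iff_no_common_seg cube_reps_range by blast
    then obtain z where "\<forall>i. i < d \<longrightarrow> covers_seg (x i) (z i) \<and> covers_seg (y i) (z i)"
      by metis
    then show False
      using no_common by (auto simp: covers_def)
  qed
qed

lemma packing_common_cell_eq:
  assumes "cube_packing d P" "x \<in> P" "y \<in> P" "covers d x z" "covers d y z"
  shows "x = y"
  using assms disjoint_iff_no_common_cell unfolding cube_packing_def by blast

lemma disjoint_from_iff_holes:
  assumes "y \<in> cube_reps d" "P \<subseteq> cube_reps d"
  shows "disjoint_from d P y \<longleftrightarrow> (\<forall>z. covers d y z \<longrightarrow> hole d P z)"
  using assms disjoint_iff_no_common_cell unfolding disjoint_from_def hole_def by blast

lemma packing_insert:
  assumes "cube_packing d P" "y \<in> cube_reps d" "disjoint_from d P y"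
  shows "cube_packing d (insert y P)" and "y \<notin> P"
  using assms unfolding cube_packing_def disjoint_from_def by (auto simp: abs_minus_commute)

lemma covers_upd_ge: "d \<le> i \<Longrightarrow> covers d (x(i := a)) z \<longleftrightarrow> covers d x z"
  by (simp add: covers_def)

lemma covers_Suc_upd: "covers (Suc n) x (z(n := t)) \<longleftrightarrow> covers n x z \<and> covers_seg (x n) t"
  by (auto simp: covers_def less_Suc_eq)

lemma covers_separate_at:
  assumes "covers d b w" "k < d" "a k mod 4 \<noteq> b k mod 4"
  obtains t where "covers d b (w(k := t))" "\<not> covers d a (w(k := t))"
proof -
  obtain t where "covers_seg (b k) t" "\<not> covers_seg (a k) t"
    using covers_seg_separate[OF assms(3)] .
  moreover have "covers d b (w(k := t)) \<longleftrightarrow> covers_seg (b k) t"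
    and "covers d a (w(k := t)) \<longrightarrow> covers_seg (a k) t"
    using assms(1,2) by (auto simp: covers_def)
  ultimately show ?thesis
    using that by blast
qed

lemma opposite_at_if_no_common_cell:
  assumes "x \<in> cube_reps d" "y \<in> cube_reps d" "k < d"
    and "covers d x u" "covers d y v" "\<forall>i. i \<noteq> k \<longrightarrow> u i = v i"
    and "\<not> (\<exists>z. covers d x z \<and> covers d y z)"
  shows "\<bar>x k - y k\<bar> = 2"
proof (rule ccontr)
  assume "\<bar>x k - y k\<bar> \<noteq> 2"
  then obtain t where "covers_seg (x k) t" "covers_seg (y k) t"
    using opposite_iff_no_common_seg cube_reps_range assms(1-3) by blast
  then have "covers d x (v(k := t)) \<and> covers d y (v(k := t))"
    using assms(4-6) by (auto simp: covers_def)
  with assms(7) show False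
    by blast
qed

section \<open>Layers\<close>

text \<open>The layer c of a packing in dimension n + 1: the cubes meeting the slab where the last
  coordinate lies in [c, c+1[ modulo 4, with that coordinate dropped.\<close>

definition layer :: "nat \<Rightarrow> (nat \<Rightarrow> int) set \<Rightarrow> int \<Rightarrow> (nat \<Rightarrow> int) set" where
  "layer n P c = (\<lambda>x. x(n := 0)) ` {x \<in> P. covers_seg (x n) c}"

lemma layer_cong_mod: "c mod 4 = c' mod 4 \<Longrightarrow> layer n P c = layer n P c'"
  unfolding layer_def by (metis covers_seg_mod)

lemma hole_layer_iff:
  "hole n (layer n P c) w \<longleftrightarrow> (\<forall>x\<in>P. covers_seg (x n) c \<longrightarrow> \<not> covers n x w)"
  by (auto simp: hole_def layer_def covers_upd_ge)

lemma hole_Suc_upd_iff: "hole (Suc n) P (z(n := c)) \<longleftrightarrow> hole n (layer n P c) z"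
  unfolding hole_layer_iff by (auto simp: hole_def covers_Suc_upd)

lemma layer_opposite_below:
  assumes P: "cube_packing (Suc n) P" and "x \<in> P" "y \<in> P" "x \<noteq> y"
    and "covers_seg (x n) c" "covers_seg (y n) c"
  shows "\<exists>i<n. \<bar>x i - y i\<bar> = 2"
proof -
  obtain i where i: "i < Suc n" "\<bar>x i - y i\<bar> = 2"
    using assms unfolding cube_packing_def by blast
  have "x n \<in> {0..3}" "y n \<in> {0..3}"
    using assms(2,3) packing_subset_reps[OF P] cube_reps_range by blast+
  then have "i \<noteq> n"
    using i(2) assms(5,6) opposite_iff_no_common_seg by blast
  with i show ?thesis
    using less_Suc_eq by blast
qed

lemma inj_on_layer:
  assumes "cube_packing (Suc n) P"
  shows "inj_on (\<lambda>x. x(n := 0)) {x \<in> P. covers_seg (x n) c}"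
proof (rule inj_onI)
  fix x y
  assume "x \<in> {x \<in> P. covers_seg (x n) c}" "y \<in> {x \<in> P. covers_seg (x n) c}"
    and eq: "x(n := 0) = y(n := 0)"
  show "x = y"
  proof (rule ccontr)
    assume "x \<noteq> y"
    then obtain i where "i < n" "\<bar>x i - y i\<bar> = 2"
      using layer_opposite_below[OF assms] \<open>x \<in> _\<close> \<open>y \<in> _\<close> by blast
    then show False
      using fun_cong[OF eq, of i] by simp
  qed
qed

lemma layer_packing:
  assumes "cube_packing (Suc n) P"
  shows "cube_packing n (layer n P c)"
proof -
  have "layer n P c \<subseteq> cube_reps n"
    using assms unfolding cube_packing_def layer_def cube_reps_def by auto
  moreover have "\<exists>i<n. \<bar>x' i - y' i\<bar> = 2"
    if "x' \<in> layer n P c" "y' \<in> layer n P c" "x' \<noteq> y'" for x' y'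
    using that layer_opposite_below[OF assms] unfolding layer_def by fastforce
  ultimately show ?thesis
    unfolding cube_packing_def by blast
qed

lemma card_layer_opposite:
  assumes P: "cube_packing (Suc n) P"
  shows "card (layer n P c) + card (layer n P (c + 2)) = card P"
proof -
  let ?A = "{x \<in> P. covers_seg (x n) c}" and ?B = "{x \<in> P. covers_seg (x n) (c + 2)}"
  have "?A \<union> ?B = P" "?A \<inter> ?B = {}"
    using covers_seg_add2 by blast+
  then have "card ?A + card ?B = card P"
    using card_Un_disjoint[of ?A ?B] finite_packing[OF P] by simp
  then show ?thesis
    unfolding layer_def using card_image[OF inj_on_layer[OF P]] by simp
qed

lemma card_packing_le: "cube_packing d P \<Longrightarrow> card P \<le> 2 ^ d"
proof (induction d arbitrary: P)
  case 0
  have "cube_reps 0 = {\<lambda>_. 0}"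
    by (auto simp: cube_reps_def)
  then show ?case
    using packing_subset_reps[OF 0] card_mono[of "{\<lambda>_. 0}" P] by simp
next
  case (Suc n)
  have "card P = card (layer n P 0) + card (layer n P 2)"
    using card_layer_opposite[OF Suc.prems, of 0] by simp
  also have "\<dots> \<le> 2 ^ n + 2 ^ n"
    using Suc.IH[OF layer_packing[OF Suc.prems]] by (intro add_mono)
  finally show ?case
    by simp
qed

lemma tiling_no_hole: "cube_tiling d T \<Longrightarrow> \<not> hole d T z"
proof (induction d arbitrary: T z)
  case 0
  then obtain x where "x \<in> T"
    by (fastforce simp: cube_tiling_def)
  then show ?case
    by (auto simp: hole_def covers_def)
next
  case (Suc n)
  have T: "cube_packing (Suc n) T" "card T = 2 * 2 ^ n"
    using Suc.prems by (simp_all add: cube_tiling_def)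
  let ?L = "\<lambda>c. layer n T c"
  have "card (?L (z n)) + card (?L (z n + 2)) = 2 * 2 ^ n"
    using card_layer_opposite[OF T(1)] T(2) by simp
  moreover have "card (?L (z n)) \<le> 2 ^ n" "card (?L (z n + 2)) \<le> 2 ^ n"
    using card_packing_le[OF layer_packing[OF T(1)]] by blast+
  ultimately have "cube_tiling n (?L (z n))"
    using layer_packing[OF T(1)] unfolding cube_tiling_def by simp
  then have "\<not> hole n (?L (z n)) z"
    using Suc.IH by blast
  then show ?case
    using hole_Suc_upd_iff[of n T z "z n"] by simp
qed

lemma holes_of_almost_tiling:
  assumes Q: "cube_packing n Q" and card: "card Q + 1 = 2 ^ n"
    and a: "a \<in> cube_reps n" "disjoint_from n Q a"
  shows "hole n Q w \<longleftrightarrow> covers n a w"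
proof
  have "cube_tiling n (insert a Q)"
    using packing_insert[OF Q a] finite_packing[OF Q] card by (simp add: cube_tiling_def)
  then show "hole n Q w \<Longrightarrow> covers n a w"
    using tiling_no_hole by (fastforce simp: hole_def)
next
  show "covers n a w \<Longrightarrow> hole n Q w"
    using a disjoint_from_iff_holes packing_subset_reps[OF Q] by blast
qed

lemma hole_layer_neighbour:
  assumes P: "cube_packing (Suc n) P" and hole: "hole n (layer n P c) w"
  shows "hole n (layer n P (c + 1)) w \<or> hole n (layer n P (c - 1)) w"
proof (rule ccontr)
  assume "\<not> ?thesis"
  then obtain x y where x: "x \<in> P" "covers_seg (x n) (c + 1)" "covers n x w"
    and y: "y \<in> P" "covers_seg (y n) (c - 1)" "covers n y w"
    unfolding hole_layer_iff by blast
  have "\<not> covers_seg (x n) c" "\<not> covers_seg (y n) c"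
    using hole x y unfolding hole_layer_iff by blast+
  then have "covers_seg (x n) (c + 2)" "covers_seg (y n) (c + 2)"
    using x(2) y(2) unfolding covers_seg_def by presburger+
  then have "x = y"
    using packing_common_cell_eq[OF P x(1) y(1), of "w(n := c + 2)"] x(3) y(3)
    by (simp add: covers_Suc_upd)
  then show False
    using x(2) y(2) unfolding covers_seg_def by presburger
qed

section \<open>Adding a cube\<close>

lemma extensible_SucI:
  assumes P: "P \<subseteq> cube_reps (Suc n)" and a: "a \<in> cube_reps n"
    and holes: "\<And>w. covers n a w \<Longrightarrow> hole n (layer n P t) w \<and> hole n (layer n P (t + 1)) w"
  shows "extensible (Suc n) P"
proof -
  let ?y = "a(n := t mod 4)"
  have y: "?y \<in> cube_reps (Suc n)"
    using a by (auto simp: cube_reps_def less_Suc_eq)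
  have "hole (Suc n) P z" if "covers (Suc n) ?y z" for z
  proof -
    have "covers n a z" "covers_seg (t mod 4) (z n)"
      using that covers_Suc_upd[of n ?y z "z n"] by (simp_all add: covers_upd_ge)
    then have "hole n (layer n P t) z \<and> hole n (layer n P (t + 1)) z"
      and "z n mod 4 = t mod 4 \<or> z n mod 4 = (t + 1) mod 4"
      using holes unfolding covers_seg_def by (blast, presburger)
    then have "hole n (layer n P (z n)) z"
      using layer_cong_mod by metis
    then show ?thesis
      using hole_Suc_upd_iff[of n P z "z n"] by simp
  qed
  then show ?thesis
    unfolding extensible_def using disjoint_from_iff_holes[OF y P] y by blast
qed

text \<open>The new cube occupies the heights c + s and c + 2: above each of its cells, the hole at
  height c + s has a hole as a neighbour, which cannot lie in the full layer c.\<close>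

lemma extensible_Suc_full_layer:
  assumes P: "cube_packing (Suc n) P" and full: "card (layer n P c) = 2 ^ n"
    and s: "s = 1 \<or> s = -1" and ext: "extensible n (layer n P (c + s))"
  shows "extensible (Suc n) P"
proof -
  obtain a where a: "a \<in> cube_reps n" "disjoint_from n (layer n P (c + s)) a"
    using ext unfolding extensible_def by blast
  have near: "hole n (layer n P (c + s)) w" if "covers n a w" for w
    using a disjoint_from_iff_holes packing_subset_reps[OF layer_packing[OF P]] that by blast
  have far: "hole n (layer n P (c + 2)) w" if "covers n a w" for w
  proof -
    have "layer n P (c + s + 1) = layer n P c \<and> layer n P (c + s - 1) = layer n P (c + 2) \<or>
          layer n P (c + s + 1) = layer n P (c + 2) \<and> layer n P (c + s - 1) = layer n P c"
    proof (cases "s = 1")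
      case False
      with s have "(c + s - 1) mod 4 = (c + 2) mod 4"
        by presburger
      then have "layer n P (c + s - 1) = layer n P (c + 2)"
        by (rule layer_cong_mod)
      with False s show ?thesis
        by simp
    qed (simp add: ac_simps)
    moreover have "\<not> hole n (layer n P c) w"
      using tiling_no_hole layer_packing[OF P] full unfolding cube_tiling_def by blast
    ultimately show ?thesis
      using hole_layer_neighbour[OF P near[OF that]] by auto
  qed
  from s show ?thesis
  proof
    assume "s = 1"
    then show ?thesis
      using extensible_SucI[OF packing_subset_reps[OF P] a(1), of "c + 1"] near far
      by (simp add: add.assoc)
  next
    assume "s = -1"
    moreover have "layer n P (c + 2 + 1) = layer n P (c - 1)"
      by (rule layer_cong_mod) presburger
    ultimately show ?thesis
      using extensible_SucI[OF packing_subset_reps[OF P] a(1), of "c + 2"] near far by simp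
  qed
qed

lemma covered_below_hole:
  assumes "\<not> hole n (layer n P c) u" "hole n (layer n P (c + 1)) u"
  obtains x where "x \<in> P" "covers_seg (x n) (c - 1)" "covers_seg (x n) c" "covers n x u"
proof -
  obtain x where x: "x \<in> P" "covers_seg (x n) c" "covers n x u"
    using assms(1) unfolding hole_layer_iff by blast
  moreover have "\<not> covers_seg (x n) (c + 1)"
    using assms(2) x unfolding hole_layer_iff by blast
  with x(2) have "covers_seg (x n) (c - 1)"
    unfolding covers_seg_def by presburger
  ultimately show ?thesis
    using that by blast
qed

text \<open>Changing the common cell w of a and b in a coordinate k with a k \<noteq> b k gives a cell
  w(k := t) of b outside a and a cell w(k := t') of a outside b. A cube x covering w(k := t) at
  height c sits at heights c - 1, c and is opposite to a in coordinate k. A cube y covering w at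
  height c - 1 would be opposite to x in coordinate k as well, hence agree with a there and cover
  the hole w(k := t') at height c - 1.\<close>

lemma hole_below_common_cell:
  assumes P: "cube_packing (Suc n) P" and a: "a \<in> cube_reps n" and b: "b \<in> cube_reps n"
    and "a \<noteq> b"
    and holes_c: "\<And>w. hole n (layer n P c) w \<longleftrightarrow> covers n a w"
    and holes_c1: "\<And>w. hole n (layer n P (c + 1)) w \<longleftrightarrow> covers n b w"
    and w: "covers n a w" "covers n b w"
  shows "hole n (layer n P (c - 1)) w"
proof (rule ccontr)
  have P_reps: "P \<subseteq> cube_reps (Suc n)"
    using packing_subset_reps[OF P] .
  assume "\<not> ?thesis"
  then obtain y where y: "y \<in> P" "covers_seg (y n) (c - 1)" "covers n y w"
    unfolding hole_layer_iff by blast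
  obtain k where k: "k < n" "a k \<noteq> b k"
    using cube_reps_differ_below[OF a b \<open>a \<noteq> b\<close>] .
  moreover have ranges: "a k \<in> {0..3}" "b k \<in> {0..3}" "y k \<in> {0..3}"
    using a b y(1) P_reps k(1) cube_reps_range by auto
  ultimately have k_mod: "a k mod 4 \<noteq> b k mod 4"
    by (simp add: mod_pos_pos_trivial)
  obtain t where t: "covers n b (w(k := t))" "\<not> covers n a (w(k := t))"
    using covers_separate_at[where a = a, OF w(2) k(1) k_mod] .
  obtain t' where t': "covers n a (w(k := t'))" "\<not> covers n b (w(k := t'))"
    using covers_separate_at[where a = b, OF w(1) k(1) k_mod[symmetric]] .
  have hole_t': "hole n (layer n P (c - 1)) (w(k := t'))"
    using hole_layer_neighbour[OF P, of c "w(k := t')"] holes_c holes_c1 t' by auto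
  obtain x where x: "x \<in> P" "covers_seg (x n) (c - 1)" "covers_seg (x n) c" "covers n x (w(k := t))"
    using covered_below_hole holes_c holes_c1 t by metis
  have x_reps: "x \<in> cube_reps (Suc n)" "x(n := 0) \<in> cube_reps n" "x k \<in> {0..3}"
    using x(1) P_reps k(1) by (auto simp: cube_reps_def)
  have "\<not> (\<exists>z. covers n (x(n := 0)) z \<and> covers n a z)"
    using holes_c x(1,3) unfolding hole_layer_iff by (auto simp: covers_upd_ge)
  then have "\<bar>x k - a k\<bar> = 2"
    using opposite_at_if_no_common_cell[OF x_reps(2) a k(1), of "w(k := t)" w] x(4) w(1) k(1)
    by (simp add: covers_upd_ge)
  moreover have "x \<noteq> y"
    using x(3) y(1,3) holes_c[of w] w(1) unfolding hole_layer_iff by blast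
  then have "\<not> (\<exists>z. covers (Suc n) x z \<and> covers (Suc n) y z)"
    using packing_common_cell_eq[OF P x(1) y(1)] by blast
  then have "\<bar>x k - y k\<bar> = 2"
    using opposite_at_if_no_common_cell[OF x_reps(1) _ _, of y k "w(k := t, n := c - 1)" "w(n := c - 1)"]
      P_reps y x k(1) by (simp add: covers_Suc_upd subset_iff)
  ultimately have "y k = a k"
    using ranges x_reps(3) by auto
  then have "covers n y (w(k := t'))"
    using y(3) t'(1) k(1) by (auto simp: covers_def)
  then show False
    using hole_t' y(1,2) unfolding hole_layer_iff by blast
qed

lemma extensible_Suc_two_deficient_layers:
  assumes P: "cube_packing (Suc n) P"
    and card: "card (layer n P c) + 1 = 2 ^ n" "card (layer n P (c + 1)) + 1 = 2 ^ n"
    and ext: "extensible n (layer n P c)" "extensible n (layer n P (c + 1))"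
  shows "extensible (Suc n) P"
proof -
  obtain a where a: "a \<in> cube_reps n" "disjoint_from n (layer n P c) a"
    using ext(1) unfolding extensible_def by blast
  obtain b where b: "b \<in> cube_reps n" "disjoint_from n (layer n P (c + 1)) b"
    using ext(2) unfolding extensible_def by blast
  have holes_c: "hole n (layer n P c) w \<longleftrightarrow> covers n a w" for w
    using holes_of_almost_tiling[OF layer_packing[OF P] card(1) a] .
  have holes_c1: "hole n (layer n P (c + 1)) w \<longleftrightarrow> covers n b w" for w
    using holes_of_almost_tiling[OF layer_packing[OF P] card(2) b] .
  note extend = extensible_SucI[OF packing_subset_reps[OF P] a(1)]
  show ?thesis
  proof (cases "a = b")
    case True
    then show ?thesis
      using extend[of c] holes_c holes_c1 by simp
  next
    case False
    have "hole n (layer n P (c - 1)) w" if "covers n a w" for w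
    proof (cases "covers n b w")
      case True
      then show ?thesis
        using hole_below_common_cell[OF P a(1) b(1) \<open>a \<noteq> b\<close> holes_c holes_c1 that] by blast
    next
      case False
      then show ?thesis
        using hole_layer_neighbour[OF P, of c w] holes_c[of w] holes_c1[of w] that by blast
    qed
    then show ?thesis
      using extend[of "c - 1"] holes_c by simp
  qed
qed

section \<open>Packings with at most three missing cubes\<close>

lemma layer_counts_cases:
  fixes q :: "int \<Rightarrow> nat"
  assumes le: "\<And>c. q c \<le> N" and opposite: "\<And>c. q c + q (c + 2) + \<delta> = 2 * N"
    and \<delta>: "1 \<le> \<delta>" "\<delta> \<le> 3"
  shows "(\<exists>c s. (s = 1 \<or> s = -1) \<and> q c = N \<and> q (c + s) < N \<and> N \<le> q (c + s) + 3) \<or>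
    (\<exists>c. q c + 1 = N \<and> q (c + 1) + 1 = N)"
proof (cases "\<exists>c. q c = N")
  case True
  then obtain c where c: "q c = N"
    by blast
  have "q (c - 1) + q (c + 1) + \<delta> = 2 * N"
    using opposite[of "c - 1"] by (simp add: add.commute)
  with le[of "c - 1"] le[of "c + 1"] \<delta> have
    "q (c + 1) < N \<and> N \<le> q (c + 1) + 3 \<or> q (c - 1) < N \<and> N \<le> q (c - 1) + 3"
    by linarith
  with c show ?thesis
    by (metis diff_conv_add_uminus)
next
  case False
  with le have lt: "q c < N" for c
    using le_neq_implies_less by blast
  have "q 0 + 1 = N \<or> q 2 + 1 = N" "q 1 + 1 = N \<or> q 3 + 1 = N"
    using opposite[of 0] opposite[of 1] lt[of 0] lt[of 1] lt[of 2] lt[of 3] \<delta> by simp_all linarith+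
  moreover have "q 4 = q 0"
    using opposite[of 0] opposite[of 2] by simp
  ultimately have "\<exists>c\<in>{0, 1, 2, 3}. q c + 1 = N \<and> q (c + 1) + 1 = N"
    by auto
  then show ?thesis
    by blast
qed

lemma almost_tiling_extensible:
  "cube_packing d P \<Longrightarrow> card P < 2 ^ d \<Longrightarrow> 2 ^ d \<le> card P + 3 \<Longrightarrow> extensible d P"
proof (induction d arbitrary: P)
  case 0
  then have "P = {}"
    using finite_packing by simp
  moreover have "(\<lambda>_. 0) \<in> cube_reps 0"
    by (simp add: cube_reps_def)
  ultimately show ?case
    by (auto simp: extensible_def disjoint_from_def)
next
  case (Suc n)
  let ?q = "\<lambda>c. card (layer n P c)"
  have layers: "cube_packing n (layer n P c)" for c
    using layer_packing[OF Suc.prems(1)] .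
  have "(\<exists>c s. (s = 1 \<or> s = -1) \<and> ?q c = 2 ^ n \<and> ?q (c + s) < 2 ^ n \<and> 2 ^ n \<le> ?q (c + s) + 3) \<or>
    (\<exists>c. ?q c + 1 = 2 ^ n \<and> ?q (c + 1) + 1 = 2 ^ n)"
  proof (rule layer_counts_cases)
    show "?q c \<le> 2 ^ n" for c
      using card_packing_le[OF layers] .
    show "?q c + ?q (c + 2) + (2 ^ Suc n - card P) = 2 * 2 ^ n" for c
      using card_layer_opposite[OF Suc.prems(1)] Suc.prems(2) by simp
    show "1 \<le> 2 ^ Suc n - card P" "2 ^ Suc n - card P \<le> 3"
      using Suc.prems(2,3) by simp_all
  qed
  then show ?case
  proof
    assume "\<exists>c s. (s = 1 \<or> s = -1) \<and> ?q c = 2 ^ n \<and> ?q (c + s) < 2 ^ n \<and> 2 ^ n \<le> ?q (c + s) + 3"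
    then show ?case
      using extensible_Suc_full_layer[OF Suc.prems(1)] Suc.IH[OF layers] by blast
  next
    assume "\<exists>c. ?q c + 1 = 2 ^ n \<and> ?q (c + 1) + 1 = 2 ^ n"
    then show ?case
      using extensible_Suc_two_deficient_layers[OF Suc.prems(1)] Suc.IH[OF layers] by fastforce
  qed
qed

lemma packing_extends_to_tiling:
  "cube_packing d P \<Longrightarrow> card P + e = 2 ^ d \<Longrightarrow> e \<le> 3 \<Longrightarrow> \<exists>T. cube_tiling d T \<and> P \<subseteq> T"
proof (induction e arbitrary: P)
  case 0
  then show ?case
    by (auto simp: cube_tiling_def)
next
  case (Suc e)
  then obtain y where y: "y \<in> cube_reps d" "disjoint_from d P y"
    using almost_tiling_extensible[OF Suc.prems(1)] unfolding extensible_def by force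
  have "card (insert y P) + e = 2 ^ d"
    using finite_packing[OF Suc.prems(1)] packing_insert(2)[OF Suc.prems(1) y] Suc.prems(2) by simp
  then obtain T where "cube_tiling d T" "insert y P \<subseteq> T"
    using Suc.IH packing_insert(1)[OF Suc.prems(1) y] Suc.prems(3) by force
  then show ?case
    by blast
qed

theorem theorem2:
  fixes d \<delta> :: nat and P :: "(nat \<Rightarrow> int) set"
  assumes "d \<ge> 1" and "\<delta> \<in> {1, 2, 3}"
    and "cube_packing d P" and "int (card P) = 2 ^ d - int \<delta>"
  shows "\<exists>T. cube_tiling d T \<and> P \<subseteq> T"
proof -
  have "int (card P + \<delta>) = int (2 ^ d)"
    using assms(4) by simp
  then have "card P + \<delta> = 2 ^ d"
    by (simp only: of_nat_eq_iff)
  moreover have "\<delta> \<le> 3"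
    using assms(2) by auto
  ultimately show ?thesis
    using packing_extends_to_tiling assms(3) by blast
qed

end
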